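(* For $0<\delta<1$ and $\mu\in(0,1)$ let $\Gamma_{1-\delta}(\mu)=\Pr[x\le t,\ y\le t]$, where $(x,y)$ are jointly Gaussian standard normal variables with covariance $1-\delta$ and $t$ is defined by $\Pr[x\le t]=\mu$. For every constant $0<c<1$ there exist constants $C>0$ and $\delta_0>0$ such that for all $\delta\in(0,\delta_0)$ and all $\mu$ with $\delta^c\le\mu\le1-\delta^c$, we have $\mu-\Gamma_{1-\delta}(\mu)\ge C\,\delta^{\frac12+2c}$. *)

theory Defs
  imports "HOL-Probability.Probability"
begin

definition Phi :: "real \<Rightarrow> real" where
  "Phi t = measure (density lborel (\<lambda>x. ennreal (std_normal_density x))) {..t}"

definition bivariate_normal_density :: "real \<Rightarrow> real \<times> real \<Rightarrow> real" where
  "bivariate_normal_density \<rho> p =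
     exp (- ((fst p)^2 - 2 * \<rho> * fst p * snd p + (snd p)^2) / (2 * (1 - \<rho>^2)))
     / (2 * pi * sqrt (1 - \<rho>^2))"

definition Gamma_noise :: "real \<Rightarrow> real \<Rightarrow> real" where
  "Gamma_noise \<rho> \<mu> =
     (let t = (THE t. Phi t = \<mu>)
      in measure (density (lborel :: (real \<times> real) measure)
                     (\<lambda>p. ennreal (bivariate_normal_density \<rho> p)))
                 {p. fst p \<le> t \<and> snd p \<le> t})"

end

theory Submission
  imports Defs
begin

text \<open>Write \<open>\<mu> = \<Phi>(t)\<close>. Then \<open>\<mu> - \<Gamma>(\<mu>) = Pr[x \<le> t, y > t]\<close>, which is at least the mass of
  the box \<open>[t - \<surd>\<delta>, t] \<times> (t, t + \<surd>\<delta>]\<close> of area \<open>\<delta>\<close>. On this box the exponent of the bivariate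
  density is \<open>O(1 + t\<^sup>2)\<close>, because \<open>(x - y)\<^sup>2 \<le> 4\<delta>\<close> compensates the factor \<open>1/(1 - \<rho>\<^sup>2) \<approx> 1/(2\<delta>)\<close>,
  while the normalisation is \<open>\<approx> 1/\<surd>\<delta>\<close>. Hence the box has mass \<open>\<ge> c\<^sub>0 \<surd>\<delta> exp(-3t\<^sup>2/4)\<close>, and the
  Gaussian tail bound \<open>min(\<mu>, 1 - \<mu>) \<le> 2 exp(-3t\<^sup>2/8)\<close> turns \<open>\<delta>\<^sup>c \<le> min(\<mu>, 1 - \<mu>)\<close> into
  \<open>\<delta>\<^sup>2\<^sup>c \<le> 4 exp(-3t\<^sup>2/4)\<close>. The argument works for every \<open>c\<close>, with \<open>\<delta>\<^sub>0 = 1/2\<close>.\<close>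

abbreviation std_normal :: "real measure" where
  "std_normal \<equiv> density lborel (\<lambda>x. ennreal (std_normal_density x))"

abbreviation bivariate_normal :: "real \<Rightarrow> (real \<times> real) measure" where
  "bivariate_normal \<rho> \<equiv> density lborel (\<lambda>p. ennreal (bivariate_normal_density \<rho> p))"

lemma emeasure_density_ge_const:
  assumes [measurable]: "A \<in> sets M" "g \<in> borel_measurable M"
    and "\<And>x. x \<in> A \<Longrightarrow> m \<le> g x"
  shows "ennreal m * emeasure M A \<le> emeasure (density M (\<lambda>x. ennreal (g x))) A"
proof -
  have "ennreal m * emeasure M A = (\<integral>\<^sup>+ x. ennreal m * indicator A x \<partial>M)"
    by (simp add: nn_integral_cmult_indicator)
  also have "\<dots> \<le> (\<integral>\<^sup>+ x. ennreal (g x) * indicator A x \<partial>M)"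
    by (intro nn_integral_mono) (auto simp: indicator_def assms(3) ennreal_leI)
  also have "\<dots> = emeasure (density M (\<lambda>x. ennreal (g x))) A"
    by (simp add: emeasure_density)
  finally show ?thesis .
qed

lemma emeasure_density_le_nn_integral:
  assumes [measurable]: "A \<in> sets M" "g \<in> borel_measurable M" "h \<in> borel_measurable M"
    and "\<And>x. x \<in> A \<Longrightarrow> g x \<le> h x"
  shows "emeasure (density M (\<lambda>x. ennreal (g x))) A \<le> (\<integral>\<^sup>+ x. ennreal (h x) \<partial>M)"
proof -
  have "emeasure (density M (\<lambda>x. ennreal (g x))) A = (\<integral>\<^sup>+ x. ennreal (g x) * indicator A x \<partial>M)"
    by (simp add: emeasure_density)
  also have "\<dots> \<le> (\<integral>\<^sup>+ x. ennreal (h x) \<partial>M)"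
    by (intro nn_integral_mono) (auto simp: indicator_def assms(4) ennreal_leI)
  finally show ?thesis .
qed

lemma borel_Times_borel:
  "S \<in> sets borel \<Longrightarrow> T \<in> sets borel \<Longrightarrow> (S \<times> T :: (real \<times> real) set) \<in> sets borel"
  by (metis borel_prod pair_measureI)

subsection \<open>The standard normal distribution function\<close>

lemma nn_integral_normal_density:
  assumes "0 < \<sigma>"
  shows "(\<integral>\<^sup>+ x. ennreal (normal_density m \<sigma> x) \<partial>lborel) = 1"
proof -
  interpret prob_space "density lborel (normal_density m \<sigma>)"
    by (rule prob_space_normal_density[OF assms])
  show ?thesis
    using emeasure_space_1 by (simp add: emeasure_density)
qed

lemma prob_space_std_normal: "prob_space std_normal"
  using prob_space_normal_density[of 1 0] by simp

lemma std_normal_density_le_1: "std_normal_density x \<le> 1"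
proof -
  have "1 / sqrt (2 * pi) \<le> 1"
    using pi_gt3 by (simp add: divide_le_eq_1 real_le_rsqrt)
  then show ?thesis
    unfolding std_normal_density_def by (intro mult_le_one) auto
qed

lemma Phi_diff: "a \<le> b \<Longrightarrow> Phi b - Phi a = measure std_normal {a<..b}"
proof -
  interpret prob_space std_normal by (rule prob_space_std_normal)
  assume "a \<le> b"
  then have "{..b} - {..a} = {a<..b}" "{..a} \<subseteq> {..b}" by auto
  then show ?thesis
    unfolding Phi_def by (metis finite_measure_Diff sets_density sets_lborel atMost_borel)
qed

lemma Phi_diff_le: "a \<le> b \<Longrightarrow> Phi b - Phi a \<le> b - a"
proof -
  assume ab: "a \<le> b"
  have "emeasure std_normal {a<..b} \<le> (\<integral>\<^sup>+ x. ennreal (indicator {a<..b} x) \<partial>lborel)"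
    by (rule emeasure_density_le_nn_integral) (auto simp: std_normal_density_le_1)
  also have "\<dots> = ennreal (b - a)"
    using ab by (simp add: ennreal_indicator)
  finally have "measure std_normal {a<..b} \<le> b - a"
    using ab by (simp add: measure_def enn2real_leI)
  then show ?thesis
    using Phi_diff ab by simp
qed

lemma Phi_strict_mono: "a < b \<Longrightarrow> Phi a < Phi b"
proof -
  assume ab: "a < b"
  interpret prob_space std_normal by (rule prob_space_std_normal)
  define m where "m = (1 / sqrt (2 * pi)) * exp (- (\<bar>a\<bar> + \<bar>b\<bar>)\<^sup>2 / 2)"
  have m: "0 < m" unfolding m_def by simp
  have "ennreal m * emeasure lborel {a<..b} \<le> emeasure std_normal {a<..b}"
  proof (rule emeasure_density_ge_const)
    fix x assume "x \<in> {a<..b}"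
    then have "x\<^sup>2 \<le> (\<bar>a\<bar> + \<bar>b\<bar>)\<^sup>2"
      by (intro abs_le_square_iff[THEN iffD1]) auto
    then show "m \<le> std_normal_density x"
      unfolding m_def std_normal_density_def by (intro mult_left_mono) auto
  qed auto
  then have "ennreal (m * (b - a)) \<le> ennreal (measure std_normal {a<..b})"
    using ab m by (simp add: ennreal_mult emeasure_eq_measure)
  then have "m * (b - a) \<le> measure std_normal {a<..b}"
    by (simp add: ennreal_le_iff)
  moreover have "0 < m * (b - a)" using m ab by simp
  ultimately show ?thesis
    using Phi_diff[of a b] ab by simp
qed

lemma continuous_on_Phi: "continuous_on S Phi"
proof (rule lipschitz_on_continuous_on)
  show "1-lipschitz_on S Phi"
  proof (rule lipschitz_onI)
    fix x y
    show "dist (Phi x) (Phi y) \<le> 1 * dist x y"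
      using Phi_diff_le[of x y] Phi_diff_le[of y x] Phi_strict_mono[of x y] Phi_strict_mono[of y x]
      by (cases x y rule: linorder_cases) (auto simp: dist_real_def)
  qed simp
qed

text \<open>The factor \<open>exp(-x\<^sup>2/8)\<close> left over after extracting \<open>exp(-3s\<^sup>2/8)\<close> is,
  up to the constant 2, the density of \<open>N(0, 4)\<close>.\<close>

lemma std_normal_density_le_tail:
  assumes "s\<^sup>2 \<le> x\<^sup>2"
  shows "std_normal_density x \<le> 2 * exp (- 3 * s\<^sup>2 / 8) * normal_density 0 2 x"
proof -
  have "sqrt (2 * pi * 2\<^sup>2) = sqrt (2\<^sup>2) * sqrt (2 * pi)"
    by (metis real_sqrt_mult mult.commute)
  then have "sqrt (2 * pi * 2\<^sup>2) = 2 * sqrt (2 * pi)"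
    by simp
  then have normal_2: "normal_density 0 2 x = (1 / sqrt (2 * pi)) * exp (- x\<^sup>2 / 8) / 2"
    unfolding normal_density_def by (simp add: power2_eq_square)
  have "exp (- x\<^sup>2 / 2) \<le> exp (- 3 * s\<^sup>2 / 8) * exp (- x\<^sup>2 / 8)"
    using assms by (simp add: exp_add[symmetric])
  then show ?thesis
    unfolding std_normal_density_def normal_2 by (simp add: divide_right_mono)
qed

lemma std_normal_tail:
  assumes [measurable]: "A \<in> sets borel" and "\<And>x. x \<in> A \<Longrightarrow> s\<^sup>2 \<le> x\<^sup>2"
  shows "measure std_normal A \<le> 2 * exp (- 3 * s\<^sup>2 / 8)"
proof -
  interpret prob_space std_normal by (rule prob_space_std_normal)
  have "emeasure std_normal A
          \<le> (\<integral>\<^sup>+ x. ennreal (2 * exp (- 3 * s\<^sup>2 / 8) * normal_density 0 2 x) \<partial>lborel)"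
    using assms(2) by (intro emeasure_density_le_nn_integral std_normal_density_le_tail) auto
  also have "\<dots> = ennreal (2 * exp (- 3 * s\<^sup>2 / 8))"
    by (simp add: ennreal_mult nn_integral_cmult nn_integral_normal_density)
  finally show ?thesis
    by (simp add: emeasure_eq_measure)
qed

lemma Phi_lower_tail: "0 \<le> s \<Longrightarrow> Phi (- s) \<le> 2 * exp (- 3 * s\<^sup>2 / 8)"
  unfolding Phi_def by (rule std_normal_tail) (auto simp: abs_le_square_iff[symmetric])

lemma Phi_upper_tail: "0 \<le> s \<Longrightarrow> 1 - Phi s \<le> 2 * exp (- 3 * s\<^sup>2 / 8)"
proof -
  assume s: "0 \<le> s"
  interpret prob_space std_normal by (rule prob_space_std_normal)
  have "space std_normal - {..s} = {s<..}" by auto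
  then have "1 - Phi s = measure std_normal {s<..}"
    unfolding Phi_def using prob_compl[of "{..s}"] by simp
  also have "\<dots> \<le> 2 * exp (- 3 * s\<^sup>2 / 8)"
    using s by (intro std_normal_tail) (auto simp: abs_le_square_iff[symmetric])
  finally show ?thesis .
qed

lemma Phi_tails_bound:
  assumes "\<epsilon> \<le> Phi t" "Phi t \<le> 1 - \<epsilon>"
  shows "\<epsilon> \<le> 2 * exp (- 3 * t\<^sup>2 / 8)"
  using assms Phi_lower_tail[of "- t"] Phi_upper_tail[of t] by (cases "t \<le> 0") auto

lemma Phi_surj_unit_interval:
  assumes "0 < \<mu>" "\<mu> < 1"
  obtains t where "Phi t = \<mu>"
proof -
  define \<epsilon> where "\<epsilon> = min \<mu> (1 - \<mu>)"
  have \<epsilon>: "0 < \<epsilon>" "\<epsilon> \<le> \<mu>" "\<epsilon> \<le> 1 - \<mu>"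
    using assms by (auto simp: \<epsilon>_def)
  define s where "s = sqrt (16 / (3 * \<epsilon>))"
  have s: "0 \<le> s" and "3 * s\<^sup>2 / 8 = 2 / \<epsilon>"
    unfolding s_def using \<epsilon> by auto
  moreover have "2 / \<epsilon> < exp (2 / \<epsilon>)"
    using exp_ge_add_one_self[of "2 / \<epsilon>"] by linarith
  then have "2 * exp (- (2 / \<epsilon>)) < \<epsilon>"
    using \<epsilon> by (simp add: exp_minus field_simps)
  ultimately have "2 * exp (- 3 * s\<^sup>2 / 8) < \<epsilon>"
    by simp
  then have "Phi (- s) \<le> \<mu>" "\<mu> \<le> Phi s"
    using Phi_lower_tail[OF s(1)] Phi_upper_tail[OF s(1)] \<epsilon> by linarith+
  then show ?thesis
    using IVT'[of Phi "- s" \<mu> s] s continuous_on_Phi that by auto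
qed

lemma Phi_inverse_eq:
  assumes "Phi t = \<mu>"
  shows "(THE t. Phi t = \<mu>) = t"
proof (rule the_equality)
  fix t' assume "Phi t' = \<mu>"
  then show "t' = t"
    using Phi_strict_mono[of t t'] Phi_strict_mono[of t' t] assms
    by (cases t t' rule: linorder_cases) auto
qed fact

subsection \<open>The bivariate normal distribution\<close>

lemma bivariate_normal_density_factor:
  assumes "\<bar>\<rho>\<bar> < 1"
  shows "bivariate_normal_density \<rho> (x, y)
           = std_normal_density x * normal_density (\<rho> * x) (sqrt (1 - \<rho>\<^sup>2)) y"
proof -
  have r: "0 < 1 - \<rho>\<^sup>2" using assms by (simp add: abs_square_less_1)
  then have s2: "(sqrt (1 - \<rho>\<^sup>2))\<^sup>2 = 1 - \<rho>\<^sup>2" by simp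
  have sq: "sqrt (2 * pi * (1 - \<rho>\<^sup>2)) = sqrt (2 * pi) * sqrt (1 - \<rho>\<^sup>2)"
    by (simp add: real_sqrt_mult)
  have ex: "- x\<^sup>2 / 2 + (- (y - \<rho> * x)\<^sup>2 / (2 * (1 - \<rho>\<^sup>2)))
              = - (x\<^sup>2 - 2 * \<rho> * x * y + y\<^sup>2) / (2 * (1 - \<rho>\<^sup>2))"
    using r by (simp add: field_simps power2_eq_square)
  have "std_normal_density x * normal_density (\<rho> * x) (sqrt (1 - \<rho>\<^sup>2)) y
          = 1 / (sqrt (2 * pi) * sqrt (2 * pi) * sqrt (1 - \<rho>\<^sup>2))
            * exp (- x\<^sup>2 / 2 + (- (y - \<rho> * x)\<^sup>2 / (2 * (1 - \<rho>\<^sup>2))))"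
    unfolding std_normal_density_def normal_density_def s2 sq exp_add by simp
  also have "\<dots> = bivariate_normal_density \<rho> (x, y)"
    unfolding ex bivariate_normal_density_def by simp
  finally show ?thesis by simp
qed

lemma borel_measurable_bivariate_normal_density[measurable]:
  "bivariate_normal_density \<rho> \<in> borel_measurable borel"
  unfolding bivariate_normal_density_def[abs_def] borel_prod[symmetric] by measurable

lemma emeasure_bivariate_normal_Times_UNIV:
  assumes "\<bar>\<rho>\<bar> < 1" and [measurable]: "S \<in> sets borel"
  shows "emeasure (bivariate_normal \<rho>) (S \<times> UNIV) = emeasure std_normal S"
proof -
  have r: "0 < sqrt (1 - \<rho>\<^sup>2)" using assms by (simp add: abs_square_less_1)
  have [measurable]: "bivariate_normal_density \<rho> \<in> borel_measurable (lborel \<Otimes>\<^sub>M lborel)"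
    unfolding lborel_prod by simp
  have "S \<times> UNIV \<in> sets (lborel :: (real \<times> real) measure)"
    using borel_Times_borel[of S UNIV] by simp
  then have "emeasure (bivariate_normal \<rho>) (S \<times> UNIV)
      = (\<integral>\<^sup>+ p. ennreal (bivariate_normal_density \<rho> p) * indicator S (fst p) \<partial>(lborel \<Otimes>\<^sub>M lborel))"
    by (simp add: emeasure_density lborel_prod indicator_def mem_Times_iff)
  also have "\<dots> = (\<integral>\<^sup>+ x. \<integral>\<^sup>+ y. ennreal (bivariate_normal_density \<rho> (x, y)) * indicator S (fst (x, y))
                      \<partial>lborel \<partial>lborel)"
    by (rule lborel.nn_integral_fst[symmetric]) measurable
  also have "\<dots> = (\<integral>\<^sup>+ x. ennreal (std_normal_density x) * indicator S x
                      * (\<integral>\<^sup>+ y. ennreal (normal_density (\<rho> * x) (sqrt (1 - \<rho>\<^sup>2)) y) \<partial>lborel) \<partial>lborel)"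
    using assms(1)
    by (subst nn_integral_cmult[symmetric])
       (auto intro!: nn_integral_cong simp: bivariate_normal_density_factor ennreal_mult indicator_def)
  also have "\<dots> = emeasure std_normal S"
    using r by (simp add: nn_integral_normal_density emeasure_density)
  finally show ?thesis .
qed

lemma prob_space_bivariate_normal:
  assumes "\<bar>\<rho>\<bar> < 1"
  shows "prob_space (bivariate_normal \<rho>)"
proof (rule prob_spaceI)
  show "emeasure (bivariate_normal \<rho>) (space (bivariate_normal \<rho>)) = 1"
    using emeasure_bivariate_normal_Times_UNIV[OF assms, of UNIV]
      prob_space.emeasure_space_1[OF prob_space_std_normal] by simp
qed

lemma Phi_minus_bivariate_normal_quadrant:
  assumes "\<bar>\<rho>\<bar> < 1"
  shows "Phi t - measure (bivariate_normal \<rho>) ({..t} \<times> {..t})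
           = measure (bivariate_normal \<rho>) ({..t} \<times> {t<..})"
proof -
  interpret prob_space "bivariate_normal \<rho>" by (rule prob_space_bivariate_normal[OF assms])
  have sets: "{..t} \<times> S \<in> events" if "S \<in> sets borel" for S
    using borel_Times_borel[of "{..t}" S] that by simp
  have "Phi t = measure (bivariate_normal \<rho>) ({..t} \<times> UNIV)"
    using emeasure_bivariate_normal_Times_UNIV[OF assms, of "{..t}"]
    unfolding Phi_def measure_def by simp
  also have "{..t} \<times> UNIV = ({..t} \<times> {..t}) \<union> ({..t} \<times> {t<..})" by auto
  also have "measure (bivariate_normal \<rho>) \<dots>
      = measure (bivariate_normal \<rho>) ({..t} \<times> {..t}) + measure (bivariate_normal \<rho>) ({..t} \<times> {t<..})"
    by (intro finite_measure_Union sets) auto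
  finally show ?thesis by simp
qed

text \<open>On the box of side \<open>\<surd>\<delta>\<close> just across the diagonal at \<open>(t, t)\<close>, the numerator of the exponent
  is \<open>(x - y)\<^sup>2 + 2\<delta>xy \<le> \<delta>(24 + 9t\<^sup>2/4)\<close>, and the denominator is \<open>2(1 - (1 - \<delta>)\<^sup>2) \<ge> 3\<delta>\<close>.\<close>

lemma bivariate_normal_density_near_diagonal:
  assumes d: "0 < \<delta>" "\<delta> \<le> 1/2"
    and x: "t - sqrt \<delta> \<le> x" "x \<le> t" and y: "t < y" "y \<le> t + sqrt \<delta>"
  shows "exp (- (8 + 3 * t\<^sup>2 / 4)) / (2 * pi * sqrt 2 * sqrt \<delta>)
           \<le> bivariate_normal_density (1 - \<delta>) (x, y)"
proof -
  define D where "D = 1 - (1 - \<delta>)\<^sup>2"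
  have D: "D = \<delta> * (2 - \<delta>)" "0 < D" "D \<le> 2 * \<delta>"
    using d unfolding D_def by (auto simp: power2_eq_square algebra_simps)
  define N where "N = x\<^sup>2 - 2 * (1 - \<delta>) * x * y + y\<^sup>2"
  have N: "N = (x - y)\<^sup>2 + 2 * \<delta> * (x * y)"
    unfolding N_def by (simp add: power2_eq_square algebra_simps)
  have "\<bar>x - y\<bar> \<le> \<bar>2 * sqrt \<delta>\<bar>" using x y by auto
  then have "(x - y)\<^sup>2 \<le> (2 * sqrt \<delta>)\<^sup>2" by (simp add: abs_le_square_iff)
  then have diff: "(x - y)\<^sup>2 \<le> 4 * \<delta>" using d by (simp add: power_mult_distrib)
  have "sqrt \<delta> \<le> 1" using d by simp
  then have "\<bar>x\<bar> \<le> \<bar>t\<bar> + 1" "\<bar>y\<bar> \<le> \<bar>t\<bar> + 1" using x y by linarith+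
  then have "x * y \<le> (\<bar>t\<bar> + 1) * (\<bar>t\<bar> + 1)"
    using abs_ge_self[of "x * y"] abs_mult[of x y] mult_mono[of "\<bar>x\<bar>" _ "\<bar>y\<bar>"] by fastforce
  then have "2 * \<delta> * (x * y) \<le> 2 * \<delta> * ((\<bar>t\<bar> + 1) * (\<bar>t\<bar> + 1))"
    using d by (intro mult_left_mono) auto
  then have "N \<le> \<delta> * (6 + 4 * \<bar>t\<bar> + 2 * t\<^sup>2)"
    unfolding N using diff by (simp add: algebra_simps power2_eq_square)
  also have "\<dots> \<le> \<delta> * (24 + 9 * t\<^sup>2 / 4)"
  proof -
    have "0 \<le> (\<bar>t\<bar> / 2 - 4)\<^sup>2" by simp
    then have "6 + 4 * \<bar>t\<bar> + 2 * t\<^sup>2 \<le> 24 + 9 * t\<^sup>2 / 4"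
      by (simp add: power2_eq_square algebra_simps)
    then show ?thesis
      using d by (intro mult_left_mono) auto
  qed
  also have "\<dots> = 3 * \<delta> * (8 + 3 * t\<^sup>2 / 4)" by (simp add: algebra_simps)
  also have "\<dots> \<le> 2 * D * (8 + 3 * t\<^sup>2 / 4)"
    unfolding D using d by (intro mult_right_mono) (auto simp: algebra_simps)
  finally have "N / (2 * D) \<le> 8 + 3 * t\<^sup>2 / 4"
    using D by (simp add: divide_le_eq mult.commute)
  then have "exp (- (8 + 3 * t\<^sup>2 / 4)) \<le> exp (- N / (2 * D))" by simp
  moreover have "sqrt D \<le> sqrt 2 * sqrt \<delta>"
    using D by (simp add: real_sqrt_mult[symmetric])
  ultimately have "exp (- (8 + 3 * t\<^sup>2 / 4)) / (2 * pi * sqrt 2 * sqrt \<delta>)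
                     \<le> exp (- N / (2 * D)) / (2 * pi * sqrt D)"
    using D by (intro frac_le) (auto simp: mult.assoc)
  also have "\<dots> = bivariate_normal_density (1 - \<delta>) (x, y)"
    unfolding bivariate_normal_density_def D_def N_def by simp
  finally show ?thesis .
qed

lemma measure_bivariate_normal_quadrant_ge:
  assumes d: "0 < \<delta>" "\<delta> \<le> 1/2"
  shows "exp (- (8 + 3 * t\<^sup>2 / 4)) / (2 * pi * sqrt 2) * sqrt \<delta>
           \<le> measure (bivariate_normal (1 - \<delta>)) ({..t} \<times> {t<..})"
proof -
  define m where "m = exp (- (8 + 3 * t\<^sup>2 / 4)) / (2 * pi * sqrt 2 * sqrt \<delta>)"
  define box where "box = {t - sqrt \<delta>..t} \<times> {t<..t + sqrt \<delta>}"
  have \<rho>: "\<bar>1 - \<delta>\<bar> < 1" using d by simp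
  interpret prob_space "bivariate_normal (1 - \<delta>)" by (rule prob_space_bivariate_normal[OF \<rho>])
  have box_sets: "box \<in> sets lborel" "{..t} \<times> {t<..} \<in> events"
    unfolding box_def using borel_Times_borel by auto
  have "emeasure (lborel :: (real \<times> real) measure) box
          = emeasure lborel {t - sqrt \<delta>..t} * emeasure lborel {t<..t + sqrt \<delta>}"
    unfolding box_def lborel_prod[symmetric] by (rule lborel.emeasure_pair_measure_Times) auto
  also have "\<dots> = ennreal \<delta>"
    using d by (simp add: ennreal_mult[symmetric])
  finally have area: "emeasure (lborel :: (real \<times> real) measure) box = ennreal \<delta>" .
  have "ennreal m * emeasure lborel box \<le> emeasure (bivariate_normal (1 - \<delta>)) box"
  proof (rule emeasure_density_ge_const)
    fix p assume "p \<in> box"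
    then show "m \<le> bivariate_normal_density (1 - \<delta>) p"
      unfolding box_def m_def using bivariate_normal_density_near_diagonal[OF d] by auto
  qed (use box_sets in auto)
  then have "m * \<delta> \<le> measure (bivariate_normal (1 - \<delta>)) box"
    using area d by (simp add: ennreal_mult[symmetric] emeasure_eq_measure m_def)
  also have "\<dots> \<le> measure (bivariate_normal (1 - \<delta>)) ({..t} \<times> {t<..})"
    using box_sets by (intro finite_measure_mono) (auto simp: box_def)
  also have "m * \<delta> = exp (- (8 + 3 * t\<^sup>2 / 4)) / (2 * pi * sqrt 2) * sqrt \<delta>"
    using d unfolding m_def by (simp add: field_simps real_div_sqrt)
  finally show ?thesis .
qed

subsection \<open>The noise stability bound\<close>

lemma Gamma_noise_eq:
  assumes "Phi t = \<mu>"
  shows "Gamma_noise \<rho> \<mu> = measure (bivariate_normal \<rho>) ({..t} \<times> {..t})"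
proof -
  have "{p. fst p \<le> t \<and> snd p \<le> t} = {..t} \<times> {..t}" by auto
  then show ?thesis
    unfolding Gamma_noise_def Let_def Phi_inverse_eq[OF assms] by simp
qed

lemma powr_le_of_Phi_tails:
  assumes "0 < \<delta>" "\<delta> powr c \<le> Phi t" "Phi t \<le> 1 - \<delta> powr c"
  shows "\<delta> powr (2 * c) \<le> 4 * exp (- (3 * t\<^sup>2 / 4))"
proof -
  have "\<delta> powr c \<le> 2 * exp (- 3 * t\<^sup>2 / 8)"
    using Phi_tails_bound assms(2,3) .
  then have "\<delta> powr c * \<delta> powr c \<le> (2 * exp (- 3 * t\<^sup>2 / 8)) * (2 * exp (- 3 * t\<^sup>2 / 8))"
    by (intro mult_mono) auto
  then show ?thesis
    by (simp add: powr_add[symmetric] exp_add[symmetric])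
qed

theorem lemma10:
  fixes c :: real
  assumes "0 < c" and "c < 1"
  shows "\<exists>C>0. \<exists>\<delta>0>0. \<forall>\<delta> \<mu>. 0 < \<delta> \<and> \<delta> < \<delta>0 \<and> \<delta> < 1 \<and>
           \<delta> powr c \<le> \<mu> \<and> \<mu> \<le> 1 - \<delta> powr c \<longrightarrow>
           \<mu> - Gamma_noise (1 - \<delta>) \<mu> \<ge> C * \<delta> powr (1/2 + 2*c)"
proof -
  define C :: real where "C = exp (-8) / (8 * pi * sqrt 2)"
  have bound: "C * \<delta> powr (1/2 + 2*c) \<le> \<mu> - Gamma_noise (1 - \<delta>) \<mu>"
    if d: "0 < \<delta>" "\<delta> \<le> 1/2" and \<mu>: "\<delta> powr c \<le> \<mu>" "\<mu> \<le> 1 - \<delta> powr c" for \<delta> \<mu>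
  proof -
    have "0 < \<delta> powr c" using d by simp
    then have "0 < \<mu>" "\<mu> < 1" using \<mu> by linarith+
    then obtain t where t: "Phi t = \<mu>" by (rule Phi_surj_unit_interval)
    have "C * \<delta> powr (1/2 + 2*c) = C * sqrt \<delta> * \<delta> powr (2 * c)"
      using d by (simp add: powr_add powr_half_sqrt)
    also have "\<dots> \<le> C * sqrt \<delta> * (4 * exp (- (3 * t\<^sup>2 / 4)))"
      using powr_le_of_Phi_tails[of \<delta> c t] d \<mu> t by (intro mult_left_mono) (auto simp: C_def)
    also have "\<dots> = exp (- (8 + 3 * t\<^sup>2 / 4)) / (2 * pi * sqrt 2) * sqrt \<delta>"
      unfolding C_def by (simp add: field_simps exp_add[symmetric] exp_minus)
    also have "\<dots> \<le> measure (bivariate_normal (1 - \<delta>)) ({..t} \<times> {t<..})"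
      by (rule measure_bivariate_normal_quadrant_ge[OF d])
    also have "\<dots> = \<mu> - Gamma_noise (1 - \<delta>) \<mu>"
      using Phi_minus_bivariate_normal_quadrant[of "1 - \<delta>" t] d t Gamma_noise_eq[OF t] by simp
    finally show ?thesis .
  qed
  have "0 < C" unfolding C_def by simp
  with bound show ?thesis
    by (intro exI[of _ C]) (auto intro!: exI[of _ "1/2"])
qed

end
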